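(* Let $\mathcal{G}$ be a non-empty class of graphs such that no graph in $\mathcal{G}$ contains $K_{\aleph_0}$, and for every $G\in\mathcal{G}$ and every vertex $v\in V(G)$ the graph $G-v$ contains a subgraph isomorphic to a graph in $\mathcal{G}$. Let $\mathcal{F}$ be the class of graphs that contain no subgraph isomorphic to a graph in $\mathcal{G}$. Then there is no universal graph for $\mathcal{F}$.
   Context: All graphs are simple and countable; $G$ contains $H$ if $H$ is isomorphic to a subgraph of $G$. A graph $U$ is universal for a class $\mathcal{F}$ if $U\in\mathcal{F}$ and $U$ contains every graph in $\mathcal{F}$. *)

theory Defs
  imports Main
begin

text \<open>A countable simple graph: vertex set a subset of nat (so at most countable),
  edge relation a symmetric irreflexive relation on the vertex set.\<close>
type_synonym cgraph = "nat set \<times> (nat \<times> nat) set"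

definition verts :: "cgraph \<Rightarrow> nat set" where "verts G = fst G"
definition edges :: "cgraph \<Rightarrow> (nat \<times> nat) set" where "edges G = snd G"

definition is_graph :: "cgraph \<Rightarrow> bool" where
  "is_graph G \<longleftrightarrow> edges G \<subseteq> verts G \<times> verts G \<and> sym (edges G) \<and> irrefl (edges G)"

definition contains :: "cgraph \<Rightarrow> cgraph \<Rightarrow> bool" where
  "contains G H \<longleftrightarrow> (\<exists>f. inj_on f (verts H) \<and> f ` verts H \<subseteq> verts G \<and>
      (\<forall>(x, y) \<in> edges H. (f x, f y) \<in> edges G))"

definition K_aleph0 :: cgraph where
  "K_aleph0 = (UNIV, {(x, y). x \<noteq> y})"

definition delete_vertex :: "cgraph \<Rightarrow> nat \<Rightarrow> cgraph" where
  "delete_vertex G v = (verts G - {v}, edges G \<inter> ((verts G - {v}) \<times> (verts G - {v})))"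

definition universal :: "cgraph \<Rightarrow> cgraph set \<Rightarrow> bool" where
  "universal U \<F> \<longleftrightarrow> U \<in> \<F> \<and> (\<forall>H \<in> \<F>. contains U H)"

end

theory Submission
  imports Defs
begin

text \<open>If \<open>U\<close> were universal, then the cone over \<open>U\<close> (a new apex joined to every vertex)
  would still contain no member of \<open>\<G>\<close>: a copy of \<open>G \<in> \<G>\<close> in the cone either misses the
  apex, or its part off the apex is a copy of \<open>G - v\<close> in \<open>U\<close>, which contains a member of \<open>\<G>\<close>.
  So \<open>U\<close> contains its own cone. Following the images of the apex under iterates of this
  embedding yields an infinite clique in \<open>U\<close>, and an infinite clique contains every countable
  graph, in particular a member of \<open>\<G>\<close>.\<close>

lemma contains_trans:
  assumes "contains A B" "contains B C" shows "contains A C"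
proof -
  obtain f where f: "inj_on f (verts B)" "f ` verts B \<subseteq> verts A"
    "\<forall>(x, y) \<in> edges B. (f x, f y) \<in> edges A"
    using assms(1) unfolding contains_def by blast
  obtain g where g: "inj_on g (verts C)" "g ` verts C \<subseteq> verts B"
    "\<forall>(x, y) \<in> edges C. (g x, g y) \<in> edges B"
    using assms(2) unfolding contains_def by blast
  have "inj_on (f \<circ> g) (verts C)"
    using f(1) g(1,2) by (simp add: comp_inj_on inj_on_subset)
  then show ?thesis
    unfolding contains_def using f(2,3) g(2,3) by (intro exI[of _ "f \<circ> g"]) fastforce
qed

lemma verts_delete_vertex: "verts (delete_vertex G v) = verts G - {v}"
  by (simp add: delete_vertex_def verts_def)

lemma edges_delete_vertex:
  "edges (delete_vertex G v) = edges G \<inter> ((verts G - {v}) \<times> (verts G - {v}))"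
  by (simp add: delete_vertex_def edges_def)

lemma verts_K_aleph0: "verts K_aleph0 = UNIV"
  and edges_K_aleph0: "edges K_aleph0 = {(x, y). x \<noteq> y}"
  by (simp_all add: K_aleph0_def verts_def edges_def)

lemma K_aleph0_contains: "is_graph G \<Longrightarrow> contains K_aleph0 G"
  unfolding contains_def is_graph_def irrefl_def verts_K_aleph0 edges_K_aleph0
  by (auto intro!: exI[of _ id])

definition cone :: "cgraph \<Rightarrow> cgraph" where
  "cone U = (insert 0 (Suc ` verts U),
     map_prod Suc Suc ` edges U \<union> {(0, Suc x) | x. x \<in> verts U} \<union> {(Suc x, 0) | x. x \<in> verts U})"

lemma verts_cone: "verts (cone U) = insert 0 (Suc ` verts U)"
  by (simp add: cone_def verts_def)

lemma edges_cone: "edges (cone U) =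
    map_prod Suc Suc ` edges U \<union> {(0, Suc x) | x. x \<in> verts U} \<union> {(Suc x, 0) | x. x \<in> verts U}"
  by (simp add: cone_def edges_def)

lemma is_graph_cone: "is_graph U \<Longrightarrow> is_graph (cone U)"
  unfolding is_graph_def verts_cone edges_cone sym_def irrefl_def by auto

lemma contains_of_embedding_into_cone_minus_apex:
  assumes "edges H \<subseteq> verts H \<times> verts H"
    and "inj_on f (verts H)" "f ` verts H \<subseteq> Suc ` verts U"
    and "\<forall>(x, y) \<in> edges H. (f x, f y) \<in> edges (cone U)"
  shows "contains U H"
  unfolding contains_def
proof (intro exI[of _ "\<lambda>x. f x - 1"] conjI)
  have shifted: "Suc (f x - 1) = f x" if "x \<in> verts H" for x
    using assms(3) that by fastforce
  show "inj_on (\<lambda>x. f x - 1) (verts H)"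
  proof (rule inj_onI)
    fix x y assume "x \<in> verts H" "y \<in> verts H" "f x - 1 = f y - 1"
    then have "f x = f y" using shifted by metis
    then show "x = y" using inj_onD[OF assms(2)] \<open>x \<in> verts H\<close> \<open>y \<in> verts H\<close> by blast
  qed
  show "(\<lambda>x. f x - 1) ` verts H \<subseteq> verts U"
    using assms(3) by fastforce
  show "\<forall>(x, y) \<in> edges H. (f x - 1, f y - 1) \<in> edges U"
  proof clarify
    fix x y assume xy: "(x, y) \<in> edges H"
    then have "x \<in> verts H" "y \<in> verts H" using assms(1) by blast+
    then have "(Suc (f x - 1), Suc (f y - 1)) \<in> edges (cone U)"
      using assms(4) xy shifted by fastforce
    then show "(f x - 1, f y - 1) \<in> edges U"
      unfolding edges_cone by auto
  qed
qed

lemma cone_contains_cases: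
  assumes "contains (cone U) H" and "edges H \<subseteq> verts H \<times> verts H"
  shows "contains U H \<or> (\<exists>w \<in> verts H. contains U (delete_vertex H w))"
proof -
  obtain f where f: "inj_on f (verts H)" "f ` verts H \<subseteq> verts (cone U)"
    "\<forall>(x, y) \<in> edges H. (f x, f y) \<in> edges (cone U)"
    using assms(1) unfolding contains_def by blast
  show ?thesis
  proof (cases "\<exists>w \<in> verts H. f w = 0")
    case False
    then have "f ` verts H \<subseteq> Suc ` verts U"
      using f(2) unfolding verts_cone by fastforce
    then show ?thesis
      using contains_of_embedding_into_cone_minus_apex[OF assms(2) f(1) _ f(3)] by blast
  next
    case True
    then obtain w where w: "w \<in> verts H" "f w = 0" by blast
    let ?H = "delete_vertex H w"
    have "f x \<noteq> 0" if "x \<in> verts H - {w}" for x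
      using inj_onD[OF f(1)] w that by force
    then have "f ` verts ?H \<subseteq> Suc ` verts U"
      using f(2) unfolding verts_cone verts_delete_vertex by fastforce
    moreover have "edges ?H \<subseteq> verts ?H \<times> verts ?H" "edges ?H \<subseteq> edges H"
      unfolding verts_delete_vertex edges_delete_vertex by auto
    moreover have "inj_on f (verts ?H)"
      using f(1) unfolding verts_delete_vertex by (rule inj_on_subset) blast
    ultimately have "contains U ?H"
      using f(3) by (intro contains_of_embedding_into_cone_minus_apex) auto
    then show ?thesis using w(1) by blast
  qed
qed

lemma cone_free:
  assumes "\<forall>G \<in> \<G>. is_graph G"
    and "\<forall>G \<in> \<G>. \<forall>v \<in> verts G. \<exists>H \<in> \<G>. contains (delete_vertex G v) H"
    and "\<not> (\<exists>H \<in> \<G>. contains U H)"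
  shows "\<not> (\<exists>H \<in> \<G>. contains (cone U) H)"
proof
  assume "\<exists>H \<in> \<G>. contains (cone U) H"
  then obtain G where G: "G \<in> \<G>" "contains (cone U) G" by blast
  have "edges G \<subseteq> verts G \<times> verts G"
    using assms(1) G(1) unfolding is_graph_def by blast
  then consider "contains U G" | w where "w \<in> verts G" "contains U (delete_vertex G w)"
    using cone_contains_cases[OF G(2)] by blast
  then show False
  proof cases
    case 1
    then show False using assms(3) G(1) by blast
  next
    case (2 w)
    then obtain H where "H \<in> \<G>" "contains (delete_vertex G w) H"
      using assms(2) G(1) by blast
    then show False using assms(3) contains_trans[OF 2(2)] by blast
  qed
qed

lemma contains_K_aleph0_if_contains_cone:
  assumes "is_graph U" and "contains U (cone U)"
  shows "contains U K_aleph0"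
proof -
  obtain g where g: "g ` verts (cone U) \<subseteq> verts U"
    "\<forall>(x, y) \<in> edges (cone U). (g x, g y) \<in> edges U"
    using assms(2) unfolding contains_def by blast
  have apex_edge: "(g 0, g (Suc x)) \<in> edges U" if "x \<in> verts U" for x
    using g(2) that unfolding edges_cone by blast
  have shifted_edge: "(g (Suc x), g (Suc y)) \<in> edges U" if "(x, y) \<in> edges U" for x y
    using g(2) that unfolding edges_cone by fastforce
  define a where "a n = ((\<lambda>x. g (Suc x)) ^^ n) (g 0)" for n
  have a_Suc: "a (Suc n) = g (Suc (a n))" for n
    by (simp add: a_def)
  have a_vert: "a n \<in> verts U" for n
    by (induction n) (use g(1) in \<open>auto simp: a_Suc a_def verts_cone\<close>)
  have a_edge_less: "(a i, a j) \<in> edges U" if "i < j" for i j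
    using that
  proof (induction i arbitrary: j)
    case 0
    then obtain k where "j = Suc k" using gr0_implies_Suc by blast
    then show ?case using apex_edge[OF a_vert] by (simp add: a_Suc a_def)
  next
    case (Suc i)
    then obtain k where "j = Suc k" "i < k" by (metis Suc_lessE)
    then show ?case using Suc.IH shifted_edge by (simp add: a_Suc)
  qed
  have a_edge: "(a i, a j) \<in> edges U" if "i \<noteq> j" for i j
    using that a_edge_less assms(1) unfolding is_graph_def sym_def
    by (metis linorder_neqE_nat)
  have "inj a"
    using a_edge assms(1) unfolding is_graph_def irrefl_def inj_def by metis
  then show ?thesis
    unfolding contains_def verts_K_aleph0 edges_K_aleph0
    using a_vert a_edge by blast
qed

theorem mainTheorem10:
  fixes \<G> :: "cgraph set"
  assumes "\<G> \<noteq> {}"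
    and "\<forall>G \<in> \<G>. is_graph G"
    and "\<forall>G \<in> \<G>. \<not> contains G K_aleph0"
    and "\<forall>G \<in> \<G>. \<forall>v \<in> verts G. \<exists>H \<in> \<G>. contains (delete_vertex G v) H"
  shows "\<not> (\<exists>U. universal U {F. is_graph F \<and> \<not> (\<exists>H \<in> \<G>. contains F H)})"
proof
  assume "\<exists>U. universal U {F. is_graph F \<and> \<not> (\<exists>H \<in> \<G>. contains F H)}"
  then obtain U where graph: "is_graph U" and free: "\<not> (\<exists>H \<in> \<G>. contains U H)"
    and univ: "\<And>F. is_graph F \<Longrightarrow> \<not> (\<exists>H \<in> \<G>. contains F H) \<Longrightarrow> contains U F"
    unfolding universal_def by blast
  have "contains U (cone U)"
    using univ is_graph_cone[OF graph] cone_free[OF assms(2,4) free] by blast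
  then have "contains U K_aleph0"
    using contains_K_aleph0_if_contains_cone graph by blast
  moreover obtain G where "G \<in> \<G>" using assms(1) by blast
  ultimately have "contains U G"
    using contains_trans K_aleph0_contains assms(2) by blast
  then show False using free \<open>G \<in> \<G>\<close> by blast
qed

end
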